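(* Let $d\ge 2$ and $t>0$, and let $k_{\mathrm{PF}}(x,z) := \exp\left(-t\arccos(\langle x,z\rangle)\right)$ for $x,z\in\mathbb{S}^{+}_{d-1} := \{x\in\mathbb{R}^d_{+}:\|x\|_2=1\}$. Then all coefficients $a_i$ of the Legendre polynomial expansion $k_{\mathrm{PF}}(x,z)=\sum_{i=0}^\infty a_iP_i^d(\langle x,z\rangle)$ are nonnegative.
   Context: $P_i^d$ denotes the associated Legendre polynomial of degree $i$ in dimension $d$. *)

theory Defs
  imports "HOL-Analysis.Analysis"
begin

text \<open>Legendre (Gegenbauer) polynomial P_n^d of degree n in dimension d, normalised by
  P_n^d(1) = 1, via the standard three-term recurrence
  P_{n+1}(s) = ((2n+d-2) s P_n(s) - n P_{n-1}(s)) / (n+d-2).\<close>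
fun legendre :: "nat \<Rightarrow> nat \<Rightarrow> real \<Rightarrow> real" where
  "legendre d 0 s = 1"
| "legendre d (Suc 0) s = s"
| "legendre d (Suc (Suc n)) s =
     ((2 * real n + real d) * s * legendre d (Suc n) s - (real n + 1) * legendre d n s)
       / (real n + real d - 1)"

definition legendre_weight :: "nat \<Rightarrow> real \<Rightarrow> real" where
  "legendre_weight d s = (1 - s\<^sup>2) powr ((real d - 3) / 2)"

text \<open>The i-th coefficient a_i of the Legendre expansion f(s) = sum_i a_i P_i^d(s) on [-1,1]
  (orthogonal projection coefficient).\<close>
definition legendre_coeff :: "nat \<Rightarrow> (real \<Rightarrow> real) \<Rightarrow> nat \<Rightarrow> real" where
  "legendre_coeff d f i =
     integral {-1..1} (\<lambda>s. f s * legendre d i s * legendre_weight d s)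
     / integral {-1..1} (\<lambda>s. (legendre d i s)\<^sup>2 * legendre_weight d s)"

end

theory Submission
  imports Defs
begin

text \<open>Since arccos s = pi/2 - arcsin s, the kernel is exp (-t pi/2) exp (t arcsin s), and
  exp (t arcsin x) has a Maclaurin series with nonnegative coefficients: it solves
  (1 - x^2) y'' - x y' = t^2 y, which makes the coefficients satisfy a two-step
  recurrence with positive factors. So it suffices that every moment of s^k P_i against the
  weight is nonnegative. By the three-term recurrence, s P_(n+1) is a nonnegative combination of
  P_(n+2) and P_n, which reduces the moments to the integrals of P_i themselves; these vanish for
  i \<ge> 1 by integrating the derivative of (1 - s^2)^((d-1)/2) P_m. Finally, nonnegative
  coefficients bound the partial sums by the maximum of the kernel, so dominated convergence carries
  the sign over to the integral of the series.\<close>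

section \<open>The weight and weighted integrals\<close>

lemma legendre_weight_nonneg: "0 \<le> legendre_weight d s"
  by (simp add: legendre_weight_def)

lemma legendre_weight_le_powr_neg_half:
  assumes "d \<ge> 2" "-1 \<le> s" "s \<le> 1"
  shows "legendre_weight d s \<le> (1 - s\<^sup>2) powr (-1/2)"
proof -
  have "0 \<le> 1 - s\<^sup>2" "1 - s\<^sup>2 \<le> 1"
    using assms by (auto simp: abs_square_le_1 abs_le_iff)
  moreover have "-1/2 \<le> (real d - 3) / 2"
    using assms by auto
  ultimately show ?thesis
    unfolding legendre_weight_def by (rule powr_mono'[rotated])
qed

lemma has_integral_arcsin_derivative:
  "((\<lambda>s. (1 - s\<^sup>2) powr (-1/2)) has_integral pi) {-1..1}"
proof -
  have "((\<lambda>s. (1 - s\<^sup>2) powr (-1/2)) has_integral (arcsin 1 - arcsin (-1))) {-1..1}"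
  proof (rule fundamental_theorem_of_calculus_interior)
    fix x :: real
    assume x: "x \<in> {-1<..<1}"
    then have "(arcsin has_real_derivative inverse (sqrt (1 - x\<^sup>2))) (at x)"
      by (intro DERIV_arcsin) auto
    moreover have "inverse (sqrt (1 - x\<^sup>2)) = (1 - x\<^sup>2) powr (-1/2)"
      using x by (simp add: powr_minus powr_half_sqrt abs_square_le_1 abs_le_iff)
    ultimately show "(arcsin has_vector_derivative (1 - x\<^sup>2) powr (-1/2)) (at x)"
      by (simp add: has_real_derivative_iff_has_vector_derivative)
  qed (auto intro: continuous_on_arcsin')
  then show ?thesis
    by simp
qed

text \<open>For d = 2 the weight is unbounded at the endpoints; it is dominated by the derivative
  of arcsin.\<close>

lemma legendre_weight_absolutely_integrable:
  assumes "d \<ge> 2"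
  shows "legendre_weight d absolutely_integrable_on {-1..1}"
proof (rule measurable_bounded_by_integrable_imp_absolutely_integrable)
  show "legendre_weight d \<in> borel_measurable (lebesgue_on {-1..1})"
    unfolding legendre_weight_def by measurable (auto simp: id_def[symmetric])
  show "(\<lambda>s. (1 - s\<^sup>2) powr (-1/2)) integrable_on {-1..1::real}"
    using has_integral_arcsin_derivative by blast
  show "norm (legendre_weight d s) \<le> (1 - s\<^sup>2) powr (-1/2)" if "s \<in> {-1..1}" for s
    using that legendre_weight_le_powr_neg_half[OF assms] legendre_weight_nonneg[of d s] by auto
qed auto

lemma integrable_continuous_times_legendre_weight:
  assumes "d \<ge> 2" "continuous_on {-1..1} g"
  shows "(\<lambda>s. g s * legendre_weight d s) integrable_on {-1..1}"
proof -
  have "(\<lambda>s. g s * legendre_weight d s) absolutely_integrable_on {-1..1}"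
  proof (rule absolutely_integrable_bounded_measurable_product_real)
    show "g \<in> borel_measurable (lebesgue_on {-1..1})"
      by (rule continuous_imp_measurable_on_sets_lebesgue[OF assms(2)]) auto
    show "bounded (g ` {-1..1})"
      by (intro compact_imp_bounded compact_continuous_image assms(2)) auto
  qed (use legendre_weight_absolutely_integrable[OF assms(1)] in auto)
  then show ?thesis
    using absolutely_integrable_on_def by blast
qed

definition weighted_integral :: "nat \<Rightarrow> (real \<Rightarrow> real) \<Rightarrow> real" where
  "weighted_integral d g = integral {-1..1} (\<lambda>s. g s * legendre_weight d s)"

lemma weighted_integral_cong:
  "(\<And>s. -1 \<le> s \<Longrightarrow> s \<le> 1 \<Longrightarrow> g s = h s) \<Longrightarrow> weighted_integral d g = weighted_integral d h"
  unfolding weighted_integral_def by (intro integral_cong) auto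

lemma weighted_integral_cmult: "weighted_integral d (\<lambda>s. c * g s) = c * weighted_integral d g"
  unfolding weighted_integral_def by (simp add: mult.assoc)

lemma weighted_integral_lincomb:
  assumes "d \<ge> 2" "continuous_on {-1..1} g" "continuous_on {-1..1} h"
  shows "weighted_integral d (\<lambda>s. a * g s + b * h s) = a * weighted_integral d g + b * weighted_integral d h"
proof -
  have "weighted_integral d (\<lambda>s. a * g s + b * h s)
      = weighted_integral d (\<lambda>s. a * g s) + weighted_integral d (\<lambda>s. b * h s)"
    unfolding weighted_integral_def distrib_right
    by (rule integral_add; rule integrable_continuous_times_legendre_weight)
       (use assms in \<open>auto intro!: continuous_intros\<close>)
  then show ?thesis
    by (simp add: weighted_integral_cmult)
qed

lemma weighted_integral_diff:
  assumes "d \<ge> 2" "continuous_on {-1..1} g" "continuous_on {-1..1} h"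
  shows "weighted_integral d (\<lambda>s. a * g s - b * h s) = a * weighted_integral d g - b * weighted_integral d h"
  using weighted_integral_lincomb[OF assms, of a "- b"] by simp

lemma weighted_integral_sum:
  fixes k :: nat
  assumes "d \<ge> 2" "\<And>n. continuous_on {-1..1} (g n)"
  shows "weighted_integral d (\<lambda>s. \<Sum>n<k. a n * g n s) = (\<Sum>n<k. a n * weighted_integral d (g n))"
proof (induction k)
  case 0
  then show ?case
    by (simp add: weighted_integral_def)
next
  case (Suc k)
  have "weighted_integral d (\<lambda>s. 1 * (\<Sum>n<k. a n * g n s) + a k * g k s)
      = 1 * weighted_integral d (\<lambda>s. \<Sum>n<k. a n * g n s) + a k * weighted_integral d (g k)"
    by (rule weighted_integral_lincomb) (use assms in \<open>auto intro!: continuous_intros\<close>)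
  then show ?case
    using Suc by simp
qed

lemma weighted_integral_nonneg:
  assumes "d \<ge> 2" "continuous_on {-1..1} g" "\<And>s. -1 \<le> s \<Longrightarrow> s \<le> 1 \<Longrightarrow> 0 \<le> g s"
  shows "0 \<le> weighted_integral d g"
  unfolding weighted_integral_def
  by (rule integral_nonneg[OF integrable_continuous_times_legendre_weight[OF assms(1,2)]])
     (use assms(3) legendre_weight_nonneg in auto)

section \<open>Moments of Legendre polynomials\<close>

lemma continuous_legendre: "isCont (\<lambda>s. legendre d n s) x"
  by (induction d n x rule: legendre.induct) (auto simp: divide_inverse intro!: continuous_intros)

lemma continuous_on_legendre: "continuous_on S (legendre d n)"
  by (simp add: continuous_at_imp_continuous_on continuous_legendre)

lemma legendre_recurrence:
  assumes "d \<ge> 2"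
  shows "(real n + real d - 1) * legendre d (Suc (Suc n)) s =
    (2 * real n + real d) * s * legendre d (Suc n) s - (real n + 1) * legendre d n s"
  using assms by simp

fun legendre_deriv :: "nat \<Rightarrow> nat \<Rightarrow> real \<Rightarrow> real" where
  "legendre_deriv d 0 s = 0"
| "legendre_deriv d (Suc 0) s = 1"
| "legendre_deriv d (Suc (Suc n)) s =
     ((2 * real n + real d) * (legendre d (Suc n) s + s * legendre_deriv d (Suc n) s)
       - (real n + 1) * legendre_deriv d n s) / (real n + real d - 1)"

lemma has_real_derivative_legendre:
  "((\<lambda>s. legendre d n s) has_real_derivative legendre_deriv d n x) (at x)"
proof (induction d n x rule: legendre.induct)
  case (3 d n x)
  have "((\<lambda>s. (2 * real n + real d) * s * legendre d (Suc n) s - (real n + 1) * legendre d n s)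
      has_real_derivative (2 * real n + real d) * (legendre d (Suc n) x + x * legendre_deriv d (Suc n) x)
       - (real n + 1) * legendre_deriv d n x) (at x)"
    by (auto intro!: derivative_eq_intros 3 simp: algebra_simps)
  from DERIV_cdivide[OF this, of "real n + real d - 1"] show ?case
    by simp
qed (auto intro!: derivative_eq_intros)

declare legendre.simps(3) [simp del]

lemma legendre_deriv_identity:
  assumes "d \<ge> 2"
  shows "(1 - s\<^sup>2) * legendre_deriv d n s = real n * (legendre d (n - 1) s - s * legendre d n s)"
proof (induction n rule: induct_nat_012)
  case (ge2 n)
  define c where "c = real n + real d - 1"
  have "c \<noteq> 0"
    using assms unfolding c_def by linarith
  have lower: "real n * legendre d (n - 1) s =
      (2 * real n + real d - 2) * s * legendre d n s - (real n + real d - 2) * legendre d (Suc n) s"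
    using legendre_recurrence[OF assms, of "n - 1" s] by (cases n) (simp_all add: algebra_simps)
  have P: "c * legendre d (Suc (Suc n)) s = (2 * real n + real d) * s * legendre d (Suc n) s - (real n + 1) * legendre d n s"
    unfolding c_def using legendre_recurrence[OF assms] .
  have D: "c * legendre_deriv d (Suc (Suc n)) s = (2 * real n + real d) * (legendre d (Suc n) s + s * legendre_deriv d (Suc n) s)
       - (real n + 1) * legendre_deriv d n s"
    using \<open>c \<noteq> 0\<close> unfolding c_def by simp
  let ?P = "\<lambda>k. legendre d k s" and ?D = "\<lambda>k. legendre_deriv d k s"
  have "c * ((1 - s\<^sup>2) * ?D (Suc (Suc n))) = (1 - s\<^sup>2) * (c * ?D (Suc (Suc n)))"
    by (simp only: mult_ac)
  also have "\<dots> = (2 * real n + real d) * (1 - s\<^sup>2) * ?P (Suc n)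
      + (2 * real n + real d) * s * ((1 - s\<^sup>2) * ?D (Suc n)) - (real n + 1) * ((1 - s\<^sup>2) * ?D n)"
    unfolding D by (simp add: algebra_simps)
  also have "\<dots> = (2 * real n + real d) * (1 - s\<^sup>2) * ?P (Suc n)
      + (2 * real n + real d) * s * (real n + 1) * (?P n - s * ?P (Suc n))
      - (real n + 1) * (real n * ?P (n - 1) - real n * s * ?P n)"
    unfolding ge2 by (simp add: algebra_simps)
  also have "\<dots> = real (Suc (Suc n)) * (c * ?P (Suc n) - s * (c * ?P (Suc (Suc n))))"
    unfolding lower P by (simp add: c_def algebra_simps power2_eq_square)
  finally have "c * ((1 - s\<^sup>2) * ?D (Suc (Suc n))) = c * (real (Suc (Suc n)) * (?P (Suc n) - s * ?P (Suc (Suc n))))"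
    by (simp add: algebra_simps)
  then show ?case
    by (simp only: mult_left_cancel[OF \<open>c \<noteq> 0\<close>] diff_Suc_1)
qed (simp_all add: power2_eq_square)

lemma has_real_derivative_weighted_legendre:
  assumes d: "d \<ge> 2" and s: "-1 < s" "s < 1"
  shows "((\<lambda>s. (1 - s\<^sup>2) powr ((real d - 1) / 2) * legendre d m s) has_real_derivative
     legendre_weight d s * (real m * legendre d (m - 1) s - (real m + real d - 1) * s * legendre d m s)) (at s)"
proof -
  have pos: "0 < 1 - s\<^sup>2"
    using s by (simp add: abs_square_less_1 abs_less_iff)
  have w: "legendre_weight d s = (1 - s\<^sup>2) powr ((real d - 1) / 2 - 1)"
    unfolding legendre_weight_def by (simp add: diff_divide_distrib)
  have "(1 - s\<^sup>2) powr ((real d - 1) / 2) = (1 - s\<^sup>2) powr ((real d - 1) / 2 - 1) * (1 - s\<^sup>2) powr 1"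
    unfolding powr_add[symmetric] by simp
  then have split: "(1 - s\<^sup>2) powr ((real d - 1) / 2) = legendre_weight d s * (1 - s\<^sup>2)"
    unfolding w using pos by simp
  have "(1 - s\<^sup>2) powr ((real d - 1) / 2) * legendre_deriv d m s
      + (real d - 1) / 2 * legendre_weight d s * (- (2 * s)) * legendre d m s
      = legendre_weight d s * ((1 - s\<^sup>2) * legendre_deriv d m s) - (real d - 1) * s * legendre_weight d s * legendre d m s"
    unfolding split by (simp add: field_simps)
  also have "\<dots> = legendre_weight d s * (real m * legendre d (m - 1) s - (real m + real d - 1) * s * legendre d m s)"
    unfolding legendre_deriv_identity[OF d] by (simp add: algebra_simps)
  finally show ?thesis
    unfolding w using pos by (auto intro!: derivative_eq_intros has_real_derivative_legendre simp: mult_ac)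
qed

lemma weighted_integral_legendre_lowering:
  assumes d: "d \<ge> 2"
  shows "real m * weighted_integral d (legendre d (m - 1))
    = (real m + real d - 1) * weighted_integral d (\<lambda>s. s * legendre d m s)"
proof -
  let ?F = "\<lambda>s. (1 - s\<^sup>2) powr ((real d - 1) / 2) * legendre d m s"
  let ?g = "\<lambda>s. real m * legendre d (m - 1) s - (real m + real d - 1) * (s * legendre d m s)"
  have "((\<lambda>s. ?g s * legendre_weight d s) has_integral (?F 1 - ?F (-1))) {-1..1}"
  proof (rule fundamental_theorem_of_calculus_interior)
    have "continuous_on {-1..1} (\<lambda>s::real. (1 - s\<^sup>2) powr ((real d - 1) / 2))"
      using d by (intro continuous_on_powr') (auto intro!: continuous_intros simp: abs_square_le_1 abs_le_iff)
    then show "continuous_on {-1..1} ?F"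
      by (intro continuous_on_mult continuous_on_legendre)
    show "(?F has_vector_derivative ?g x * legendre_weight d x) (at x)" if "x \<in> {-1<..<1}" for x
      using has_real_derivative_weighted_legendre[OF d, of x m] that
      by (simp add: has_real_derivative_iff_has_vector_derivative algebra_simps)
  qed simp
  \<comment> \<open>both boundary values vanish, as the exponent (d - 1)/2 is positive\<close>
  then have "weighted_integral d ?g = 0"
    unfolding weighted_integral_def by (simp add: integral_unique)
  also have "weighted_integral d ?g = real m * weighted_integral d (legendre d (m - 1))
      - (real m + real d - 1) * weighted_integral d (\<lambda>s. s * legendre d m s)"
    by (intro weighted_integral_diff d continuous_on_legendre continuous_on_mult continuous_on_id)
  finally show ?thesis
    by simp
qed

lemma weighted_integral_legendre_Suc:
  assumes d: "d \<ge> 2"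
  shows "weighted_integral d (legendre d (Suc n)) = 0"
proof (induction n rule: less_induct)
  case (less n)
  let ?I = "\<lambda>k. weighted_integral d (legendre d k)"
  let ?J = "\<lambda>k. weighted_integral d (\<lambda>s. s * legendre d k s)"
  show ?case
  proof (cases n)
    case 0
    have "?I (Suc 0) = ?J 0"
      by (rule weighted_integral_cong) simp
    then show ?thesis
      using 0 weighted_integral_legendre_lowering[OF d, of 0] d by simp
  next
    case (Suc m)
    have "(real m + real d - 1) * ?I (Suc (Suc m))
        = weighted_integral d (\<lambda>s. (2 * real m + real d) * (s * legendre d (Suc m) s) - (real m + 1) * legendre d m s)"
      using legendre_recurrence[OF d, of m]
      by (simp only: weighted_integral_cmult[symmetric] mult.assoc)
    also have "\<dots> = (2 * real m + real d) * ?J (Suc m) - (real m + 1) * ?I m"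
      by (intro weighted_integral_diff d continuous_on_legendre continuous_on_mult continuous_on_id)
    finally have rec: "(real m + real d - 1) * ?I (Suc (Suc m)) = (2 * real m + real d) * ?J (Suc m) - (real m + 1) * ?I m" .
    have lowering: "(real m + real d) * ?J (Suc m) = (real m + 1) * ?I m"
      using weighted_integral_legendre_lowering[OF d, of "Suc m"] by (simp add: algebra_simps)
    have "(real m + real d) * ((real m + real d - 1) * ?I (Suc (Suc m)))
        = (2 * real m + real d) * ((real m + real d) * ?J (Suc m)) - (real m + real d) * (real m + 1) * ?I m"
      unfolding rec by (simp add: algebra_simps)
    also have "\<dots> = (real m + 1) * (real m * ?I m)"
      unfolding lowering by (simp add: algebra_simps)
    also have "real m * ?I m = 0"
      using less[of "m - 1"] Suc by (cases m) auto
    finally show ?thesis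
      using Suc d by simp
  qed
qed

lemma weighted_integral_legendre_nonneg:
  assumes "d \<ge> 2"
  shows "0 \<le> weighted_integral d (legendre d n)"
proof (cases n)
  case 0
  then show ?thesis
    using assms by (auto intro!: weighted_integral_nonneg)
qed (simp add: weighted_integral_legendre_Suc[OF assms])

lemma times_legendre_Suc_eq:
  assumes "d \<ge> 2"
  shows "s * legendre d (Suc n) s = (real n + real d - 1) / (2 * real n + real d) * legendre d (Suc (Suc n)) s
    + (real n + 1) / (2 * real n + real d) * legendre d n s"
proof -
  have "(2 * real n + real d) * (s * legendre d (Suc n) s)
      = (real n + real d - 1) * legendre d (Suc (Suc n)) s + (real n + 1) * legendre d n s"
    using legendre_recurrence[OF assms, of n s] by (simp add: algebra_simps)
  moreover have "2 * real n + real d > 0"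
    using assms by simp
  ultimately show ?thesis
    by (simp add: add_divide_distrib[symmetric] eq_divide_eq mult.commute)
qed

lemma weighted_integral_power_legendre_nonneg:
  assumes d: "d \<ge> 2"
  shows "0 \<le> weighted_integral d (\<lambda>s. s ^ k * legendre d i s)"
proof (induction k arbitrary: i)
  case 0
  then show ?case
    using weighted_integral_legendre_nonneg[OF d] by simp
next
  case (Suc k)
  show ?case
  proof (cases i)
    case 0
    have "weighted_integral d (\<lambda>s. s ^ Suc k * legendre d i s) = weighted_integral d (\<lambda>s. s ^ k * legendre d (Suc 0) s)"
      using 0 by (intro weighted_integral_cong) simp
    then show ?thesis
      using Suc.IH[of "Suc 0"] by simp
  next
    case (Suc n)
    let ?a = "(real n + real d - 1) / (2 * real n + real d)"
    let ?b = "(real n + 1) / (2 * real n + real d)"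
    have "s ^ Suc k * legendre d i s = ?a * (s ^ k * legendre d (Suc (Suc n)) s) + ?b * (s ^ k * legendre d n s)" for s
    proof -
      have "s ^ Suc k * legendre d i s = s ^ k * (s * legendre d (Suc n) s)"
        using Suc by simp
      also have "\<dots> = ?a * (s ^ k * legendre d (Suc (Suc n)) s) + ?b * (s ^ k * legendre d n s)"
        unfolding times_legendre_Suc_eq[OF d] by (simp add: algebra_simps)
      finally show ?thesis .
    qed
    then have "weighted_integral d (\<lambda>s. s ^ Suc k * legendre d i s)
        = weighted_integral d (\<lambda>s. ?a * (s ^ k * legendre d (Suc (Suc n)) s) + ?b * (s ^ k * legendre d n s))"
      by (intro weighted_integral_cong) simp
    also have "\<dots> = ?a * weighted_integral d (\<lambda>s. s ^ k * legendre d (Suc (Suc n)) s)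
        + ?b * weighted_integral d (\<lambda>s. s ^ k * legendre d n s)"
      by (intro weighted_integral_lincomb d continuous_intros continuous_on_legendre)
    also have "\<dots> \<ge> 0"
      using Suc.IH d by (intro add_nonneg_nonneg mult_nonneg_nonneg divide_nonneg_nonneg) auto
    finally show ?thesis .
  qed
qed

section \<open>The Maclaurin series of exp (t arcsin x)\<close>

text \<open>The recurrence comes from the differential equation (1 - x^2) y'' - x y' = t^2 y.\<close>

fun exp_arcsin_coeff :: "real \<Rightarrow> nat \<Rightarrow> real" where
  "exp_arcsin_coeff t 0 = 1"
| "exp_arcsin_coeff t (Suc 0) = t"
| "exp_arcsin_coeff t (Suc (Suc k)) =
     ((real k)\<^sup>2 + t\<^sup>2) / ((real k + 1) * (real k + 2)) * exp_arcsin_coeff t k"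

lemma exp_arcsin_coeff_nonneg: "t \<ge> 0 \<Longrightarrow> 0 \<le> exp_arcsin_coeff t k"
  by (induction t k rule: exp_arcsin_coeff.induct) auto

lemma exp_arcsin_coeff_bounded: "\<exists>M. \<forall>k. \<bar>exp_arcsin_coeff t k\<bar> \<le> M"
proof -
  define K where "K = nat \<lceil>t\<^sup>2\<rceil>"
  define M where "M = Max ((\<lambda>k. \<bar>exp_arcsin_coeff t k\<bar>) ` {..Suc K})"
  have "\<bar>exp_arcsin_coeff t k\<bar> \<le> M" for k
  proof (induction k rule: less_induct)
    case (less k)
    show ?case
    proof (cases "k \<le> Suc K")
      case True
      then show ?thesis
        unfolding M_def by (intro Max_ge) auto
    next
      case False
      then obtain j where j: "k = Suc (Suc j)" "K \<le> j"
        by (metis Suc_le_D not_less_eq_eq)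
      have "t\<^sup>2 \<le> real j"
        using j unfolding K_def by linarith
      then have "(real j)\<^sup>2 + t\<^sup>2 \<le> (real j + 1) * (real j + 2)"
        by (simp add: power2_eq_square algebra_simps)
      then have ratio: "((real j)\<^sup>2 + t\<^sup>2) / ((real j + 1) * (real j + 2)) \<le> 1"
        by (simp add: divide_le_eq_1_pos)
      have "\<bar>exp_arcsin_coeff t k\<bar> = ((real j)\<^sup>2 + t\<^sup>2) / ((real j + 1) * (real j + 2)) * \<bar>exp_arcsin_coeff t j\<bar>"
        using j by (simp add: abs_mult)
      also have "\<dots> \<le> \<bar>exp_arcsin_coeff t j\<bar>"
        using mult_right_mono[OF ratio abs_ge_zero] by simp
      also have "\<dots> \<le> M"
        using less[of j] j by simp
      finally show ?thesis .
    qed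
  qed
  then show ?thesis
    by blast
qed

lemma summable_exp_arcsin_coeff:
  assumes "norm x < 1"
  shows "summable (\<lambda>n. exp_arcsin_coeff t n * x ^ n)"
proof -
  obtain M where M: "\<And>k. \<bar>exp_arcsin_coeff t k\<bar> \<le> M"
    using exp_arcsin_coeff_bounded by blast
  show ?thesis
  proof (rule summable_comparison_test)
    show "\<exists>N. \<forall>n\<ge>N. norm (exp_arcsin_coeff t n * x ^ n) \<le> M * norm x ^ n"
      using M by (auto simp: abs_mult power_abs intro!: mult_right_mono)
    show "summable (\<lambda>n. M * norm x ^ n)"
      using assms by (intro summable_mult summable_geometric) auto
  qed
qed

lemma summable_diffs_exp_arcsin_coeff:
  assumes "norm x < 1"
  shows "summable (\<lambda>n. diffs (exp_arcsin_coeff t) n * x ^ n)"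
    and "summable (\<lambda>n. diffs (diffs (exp_arcsin_coeff t)) n * x ^ n)"
proof -
  have summable1: "summable (\<lambda>n. diffs (exp_arcsin_coeff t) n * y ^ n)" if "norm y < 1" for y
    using that summable_exp_arcsin_coeff by (rule termdiff_converges)
  then show "summable (\<lambda>n. diffs (exp_arcsin_coeff t) n * x ^ n)"
    using assms .
  show "summable (\<lambda>n. diffs (diffs (exp_arcsin_coeff t)) n * x ^ n)"
    using assms summable1 by (rule termdiff_converges)
qed

declare exp_arcsin_coeff.simps(3) [simp del]

lemma diffs_diffs_exp_arcsin_coeff:
  "diffs (diffs (exp_arcsin_coeff t)) n = ((real n)\<^sup>2 + t\<^sup>2) * exp_arcsin_coeff t n"
proof -
  have "diffs (diffs (exp_arcsin_coeff t)) n = ((real n + 1) * (real n + 2)) * exp_arcsin_coeff t (Suc (Suc n))"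
    by (simp add: diffs_def algebra_simps)
  also have "\<dots> = ((real n)\<^sup>2 + t\<^sup>2) * exp_arcsin_coeff t n"
    by (simp add: exp_arcsin_coeff.simps(3))
  finally show ?thesis .
qed

lemma exp_arcsin_series_ode:
  fixes t x :: real
  defines "c \<equiv> exp_arcsin_coeff t"
  assumes x: "\<bar>x\<bar> < 1"
  shows "(1 - x\<^sup>2) * (\<Sum>n. diffs (diffs c) n * x ^ n) - x * (\<Sum>n. diffs c n * x ^ n)
    = t\<^sup>2 * (\<Sum>n. c n * x ^ n)"
proof -
  have s0: "(\<lambda>n. c n * x ^ n) sums (\<Sum>n. c n * x ^ n)"
    and s1: "(\<lambda>n. diffs c n * x ^ n) sums (\<Sum>n. diffs c n * x ^ n)"
    and s2: "(\<lambda>n. diffs (diffs c) n * x ^ n) sums (\<Sum>n. diffs (diffs c) n * x ^ n)"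
    using x unfolding c_def
    by (simp_all add: summable_sums summable_exp_arcsin_coeff summable_diffs_exp_arcsin_coeff)
  have "(\<lambda>n. x\<^sup>2 * (diffs (diffs c) n * x ^ n)) sums (x\<^sup>2 * (\<Sum>n. diffs (diffs c) n * x ^ n))"
    by (rule sums_mult[OF s2])
  moreover have "x\<^sup>2 * (diffs (diffs c) n * x ^ n) = real (n + 2) * (real (n + 2) - 1) * c (n + 2) * x ^ (n + 2)" for n
    by (simp add: diffs_def power2_eq_square algebra_simps)
  ultimately have s2': "(\<lambda>n. real n * (real n - 1) * c n * x ^ n) sums (x\<^sup>2 * (\<Sum>n. diffs (diffs c) n * x ^ n))"
    using sums_zero_iff_shift[of 2 "\<lambda>n. real n * (real n - 1) * c n * x ^ n"]
    by (simp add: less_2_cases_iff)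
  have "(\<lambda>n. x * (diffs c n * x ^ n)) sums (x * (\<Sum>n. diffs c n * x ^ n))"
    by (rule sums_mult[OF s1])
  moreover have "x * (diffs c n * x ^ n) = real (n + 1) * c (n + 1) * x ^ (n + 1)" for n
    by (simp add: diffs_def algebra_simps)
  ultimately have s1': "(\<lambda>n. real n * c n * x ^ n) sums (x * (\<Sum>n. diffs c n * x ^ n))"
    using sums_zero_iff_shift[of 1 "\<lambda>n. real n * c n * x ^ n"] by simp
  have "(\<lambda>n. diffs (diffs c) n * x ^ n - real n * (real n - 1) * c n * x ^ n
      - real n * c n * x ^ n - t\<^sup>2 * (c n * x ^ n)) sums
      ((\<Sum>n. diffs (diffs c) n * x ^ n) - x\<^sup>2 * (\<Sum>n. diffs (diffs c) n * x ^ n)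
        - x * (\<Sum>n. diffs c n * x ^ n) - t\<^sup>2 * (\<Sum>n. c n * x ^ n))"
    by (intro sums_diff s2 s2' s1' sums_mult s0)
  moreover have "diffs (diffs c) n * x ^ n - real n * (real n - 1) * c n * x ^ n
      - real n * c n * x ^ n - t\<^sup>2 * (c n * x ^ n) = 0" for n
    unfolding c_def diffs_diffs_exp_arcsin_coeff by (simp add: algebra_simps power2_eq_square)
  ultimately show ?thesis
    using sums_unique2[OF _ sums_zero] by (fastforce simp: algebra_simps)
qed

lemma second_order_ode_eq_exp:
  fixes H H' :: "real \<Rightarrow> real"
  assumes ab: "a < 0" "0 < b"
    and H: "\<And>p. p \<in> {a<..<b} \<Longrightarrow> (H has_real_derivative H' p) (at p)"
    and H': "\<And>p. p \<in> {a<..<b} \<Longrightarrow> (H' has_real_derivative t\<^sup>2 * H p) (at p)"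
    and init: "H 0 = 1" "H' 0 = t"
    and p: "p \<in> {a<..<b}"
  shows "H p = exp (t * p)"
proof -
  have first_order: "H' q = t * H q" if "q \<in> {a<..<b}" for q
  proof -
    let ?v = "\<lambda>q. (H' q - t * H q) * exp (t * q)"
    have "(?v has_real_derivative 0) (at r)" if "r \<in> {a<..<b}" for r
      using that by (auto intro!: derivative_eq_intros H H' simp: algebra_simps power2_eq_square)
    then have "?v q = ?v 0"
      using ab that by (intro DERIV_isconst3[of a b]) auto
    then show ?thesis
      using init by simp
  qed
  let ?z = "\<lambda>q. H q * exp (- t * q)"
  have "(?z has_real_derivative 0) (at r)" if "r \<in> {a<..<b}" for r
    using that first_order[OF that] by (auto intro!: derivative_eq_intros H simp: algebra_simps)
  then have "?z p = ?z 0"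
    using ab p by (intro DERIV_isconst3[of a b]) auto
  then show ?thesis
    using init by (simp add: exp_minus field_simps)
qed

lemma ode_solution_eq_exp_arcsin:
  fixes f f' f'' :: "real \<Rightarrow> real"
  assumes f: "\<And>x. \<bar>x\<bar> < 1 \<Longrightarrow> (f has_real_derivative f' x) (at x)"
    and f': "\<And>x. \<bar>x\<bar> < 1 \<Longrightarrow> (f' has_real_derivative f'' x) (at x)"
    and ode: "\<And>x. \<bar>x\<bar> < 1 \<Longrightarrow> (1 - x\<^sup>2) * f'' x - x * f' x = t\<^sup>2 * f x"
    and init: "f 0 = 1" "f' 0 = t"
    and x: "\<bar>x\<bar> < 1"
  shows "f x = exp (t * arcsin x)"
proof -
  have sin_less: "\<bar>sin p\<bar> < 1" if "p \<in> {-(pi/2)<..<pi/2}" for p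
  proof -
    have "0 < cos p"
      using that by (intro cos_gt_zero_pi) auto
    then have "(sin p)\<^sup>2 < 1"
      using sin_cos_squared_add[of p] by (smt (verit) zero_less_power)
    then show ?thesis
      by (simp add: abs_square_less_1)
  qed
  have "f (sin p) = exp (t * p)" if p: "p \<in> {-(pi/2)<..<pi/2}" for p
  proof (rule second_order_ode_eq_exp[of "-(pi/2)" "pi/2" _ "\<lambda>p. f' (sin p) * cos p"])
    fix q :: real
    assume q: "q \<in> {-(pi/2)<..<pi/2}"
    show "((\<lambda>p. f (sin p)) has_real_derivative f' (sin q) * cos q) (at q)"
      by (rule DERIV_chain2[OF f[OF sin_less[OF q]] DERIV_sin])
    have f'_sin: "((\<lambda>p. f' (sin p)) has_real_derivative f'' (sin q) * cos q) (at q)"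
      by (rule DERIV_chain2[OF f'[OF sin_less[OF q]] DERIV_sin])
    have "f'' (sin q) * (cos q)\<^sup>2 = f' (sin q) * sin q + t\<^sup>2 * f (sin q)"
      using ode[OF sin_less[OF q]] unfolding cos_squared_eq by (simp add: algebra_simps)
    then show "((\<lambda>p. f' (sin p) * cos p) has_real_derivative t\<^sup>2 * f (sin q)) (at q)"
      by (auto intro!: derivative_eq_intros f'_sin simp: algebra_simps power2_eq_square)
  qed (use p init in auto)
  moreover have "arcsin x \<in> {-(pi/2)<..<pi/2}"
    using arcsin_lt_bounded[of x] x by auto
  ultimately show ?thesis
    using x by fastforce
qed

lemma exp_arcsin_sums:
  assumes "\<bar>x\<bar> < 1"
  shows "(\<lambda>n. exp_arcsin_coeff t n * x ^ n) sums exp (t * arcsin x)"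
proof -
  let ?c = "exp_arcsin_coeff t"
  have "(\<Sum>n. ?c n * x ^ n) = exp (t * arcsin x)"
  proof (rule ode_solution_eq_exp_arcsin)
    fix y :: real
    assume "\<bar>y\<bar> < 1"
    then show "((\<lambda>y. \<Sum>n. ?c n * y ^ n) has_real_derivative (\<Sum>n. diffs ?c n * y ^ n)) (at y)"
      and "((\<lambda>y. \<Sum>n. diffs ?c n * y ^ n) has_real_derivative (\<Sum>n. diffs (diffs ?c) n * y ^ n)) (at y)"
      and "(1 - y\<^sup>2) * (\<Sum>n. diffs (diffs ?c) n * y ^ n) - y * (\<Sum>n. diffs ?c n * y ^ n) = t\<^sup>2 * (\<Sum>n. ?c n * y ^ n)"
      by (auto intro!: termdiffs_strong'[of 1] summable_exp_arcsin_coeff summable_diffs_exp_arcsin_coeff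
          exp_arcsin_series_ode)
  qed (use assms in \<open>simp_all add: powser_zero diffs_def\<close>)
  then show ?thesis
    using assms by (metis real_norm_def summable_exp_arcsin_coeff summable_sums)
qed

section \<open>Functions with nonnegative Maclaurin coefficients\<close>

lemma weighted_integral_legendre_nonneg_if_nonneg_coeffs:
  assumes d: "d \<ge> 2"
    and c: "\<And>n. 0 \<le> c n"
    and sums: "\<And>s. \<bar>s\<bar> < 1 \<Longrightarrow> (\<lambda>n. c n * s ^ n) sums f s"
    and f: "continuous_on {-1..1} f"
  shows "0 \<le> weighted_integral d (\<lambda>s. f s * legendre d i s)"
proof -
  obtain M where M: "\<And>s. s \<in> {-1..1} \<Longrightarrow> \<bar>f s\<bar> \<le> M"
    using compact_imp_bounded[OF compact_continuous_image[OF f]]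
    by (metis bounded_real compact_Icc image_eqI)
  define g where "g k s = (\<Sum>n<k. c n * s ^ n) * legendre d i s" for k s
  have g_nonneg: "0 \<le> weighted_integral d (g k)" for k
  proof -
    have "weighted_integral d (g k) = weighted_integral d (\<lambda>s. \<Sum>n<k. c n * (s ^ n * legendre d i s))"
      unfolding g_def by (simp add: sum_distrib_right mult.assoc)
    also have "\<dots> = (\<Sum>n<k. c n * weighted_integral d (\<lambda>s. s ^ n * legendre d i s))"
      by (intro weighted_integral_sum d continuous_intros continuous_on_legendre)
    also have "\<dots> \<ge> 0"
      using c weighted_integral_power_legendre_nonneg[OF d] by (intro sum_nonneg mult_nonneg_nonneg)
    finally show ?thesis .
  qed
  have partial_sum_bound: "\<bar>\<Sum>n<k. c n * s ^ n\<bar> \<le> M" if s: "\<bar>s\<bar> < 1" for k s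
  proof -
    have "\<bar>\<Sum>n<k. c n * s ^ n\<bar> \<le> (\<Sum>n<k. c n * \<bar>s\<bar> ^ n)"
      using sum_abs[of "\<lambda>n. c n * s ^ n" "{..<k}"] c by (simp add: abs_mult power_abs)
    also have "\<dots> \<le> f \<bar>s\<bar>"
    proof -
      have "(\<lambda>n. c n * \<bar>s\<bar> ^ n) sums f \<bar>s\<bar>"
        using sums s by simp
      moreover have "(\<Sum>n<k. c n * \<bar>s\<bar> ^ n) \<le> (\<Sum>n. c n * \<bar>s\<bar> ^ n)"
        using calculation c by (intro sum_le_suminf) (auto simp: sums_iff)
      ultimately show ?thesis
        by (simp add: sums_iff)
    qed
    also have "\<dots> \<le> M"
    proof -
      have "\<bar>s\<bar> \<in> {-1..1}"
        using s by auto
      then show ?thesis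
        using M by (fastforce simp: abs_le_iff)
    qed
    finally show ?thesis .
  qed
  let ?S = "{-1<..<(1::real)}"
  have "(\<lambda>k. integral ?S (\<lambda>s. g k s * legendre_weight d s))
      \<longlonglongrightarrow> integral ?S (\<lambda>s. f s * legendre d i s * legendre_weight d s)"
  proof (rule dominated_convergence(2))
    show "(\<lambda>s. g k s * legendre_weight d s) integrable_on ?S" for k
      unfolding g_def integrable_on_open_interval_real
      by (intro integrable_continuous_times_legendre_weight d continuous_intros continuous_on_legendre)
    show "(\<lambda>s. M * \<bar>legendre d i s\<bar> * legendre_weight d s) integrable_on ?S"
      unfolding integrable_on_open_interval_real
      by (intro integrable_continuous_times_legendre_weight d continuous_intros continuous_on_legendre)
    fix k and s :: real
    assume "s \<in> ?S"
    then have s: "\<bar>s\<bar> < 1"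
      by auto
    show "norm (g k s * legendre_weight d s) \<le> M * \<bar>legendre d i s\<bar> * legendre_weight d s"
      unfolding g_def using partial_sum_bound[OF s, of k] legendre_weight_nonneg[of d s]
      by (auto simp: abs_mult intro!: mult_right_mono)
    show "(\<lambda>k. g k s * legendre_weight d s) \<longlonglongrightarrow> f s * legendre d i s * legendre_weight d s"
      unfolding g_def using sums[OF s] by (intro tendsto_intros) (simp add: sums_def)
  qed
  then show ?thesis
    unfolding weighted_integral_def integral_open_interval_real[symmetric]
    by (rule LIMSEQ_le_const) (use g_nonneg in \<open>auto simp: weighted_integral_def integral_open_interval_real\<close>)
qed

theorem proposition2:
  fixes d :: nat and t :: real
  assumes "d \<ge> 2" and "t > 0"
  shows "\<forall>i. legendre_coeff d (\<lambda>s. exp (- t * arccos s)) i \<ge> 0"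
proof
  fix i
  have "(\<lambda>n. exp (- t * pi / 2) * exp_arcsin_coeff t n * s ^ n) sums exp (- t * arccos s)"
    if "\<bar>s\<bar> < 1" for s
  proof -
    have arccos_eq: "arccos s = pi / 2 - arcsin s"
      using that arccos_arcsin_eq[of s] by auto
    have "- t * arccos s = - t * pi / 2 + t * arcsin s"
      unfolding arccos_eq by (simp add: algebra_simps)
    then have "exp (- t * arccos s) = exp (- t * pi / 2) * exp (t * arcsin s)"
      by (simp only: exp_add)
    then show ?thesis
      using sums_mult[OF exp_arcsin_sums[OF that], of "exp (- t * pi / 2)"] by (simp add: mult.assoc)
  qed
  moreover have "0 \<le> exp (- t * pi / 2) * exp_arcsin_coeff t n" for n
    using assms(2) exp_arcsin_coeff_nonneg[of t n] by simp
  moreover have "continuous_on {-1..1} (\<lambda>s. exp (- t * arccos s))"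
    by (auto intro!: continuous_intros continuous_on_arccos')
  ultimately have "0 \<le> weighted_integral d (\<lambda>s. exp (- t * arccos s) * legendre d i s)"
    by (intro weighted_integral_legendre_nonneg_if_nonneg_coeffs[OF assms(1)])
  moreover have "0 \<le> weighted_integral d (\<lambda>s. (legendre d i s)\<^sup>2)"
    using assms(1) by (intro weighted_integral_nonneg continuous_intros continuous_on_legendre) auto
  ultimately show "0 \<le> legendre_coeff d (\<lambda>s. exp (- t * arccos s)) i"
    unfolding legendre_coeff_def weighted_integral_def by simp
qed

end
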